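(* A twisted graph $T=(\vec G,G,\prec,A)$ which has a positive sequence on $F$ is simplicial (on $F$).
   Context: Signed sets on a finite set $E$: pairs $X=(X^+,X^-)$ of disjoint subsets, $X(e)=+1,-1,0$ according as $e\in X^+$, $e\in X^-$, or neither; support $\underline X=X^+\cup X^-$. Conformal: no $e$ with $X(e)=-Y(e)\ne0$; composition $(X\circ Y)(e)=X(e)$ if $X(e)\ne0$, else $Y(e)$. For a total order $<$ on $E$, $\mathcal C(<)=\{(\{e_1,e_3\},\{e_2\}),(\{e_2\},\{e_1,e_3\}):e_1<e_2<e_3\}$ (circuits of the rank 2 oriented matroid $\mathcal M(<)$; vectors are compositions of pairwise conformal families of circuits); for a partial order $\prec$, $\mathcal C(\prec)=\bigcap_{<\supseteq\prec}\mathcal C(<)$. For a directed graph $\vec G=(V,\vec E)$ (no loops, parallel or antiparallel edges), underlying simple graph $G=(V,E)$, a strong map $\mathcal M^*(\vec G)\to\mathcal M(<)$ means every signed minimal cut $(\{(u,w):u\in S,w\notin S\},\{(u,w):w\in S,u\notin S\})$ ($S$, $V\setminus S$ inducing connected subgraphs) is a vector of $\mathcal M(<)$; $C^*_v=(\{(u,v)\in\vec E\},\{(v,u)\in\vec E\})$. A twisted graph $T=(\vec G,G,\prec,A)$: $\prec$ a partial order on $E$, $G$ three-edge-connected, $A\subset\mathcal C(\prec)$, a strong map $\mathcal M^*(\vec G)\to\mathcal M(<)$ for every total $<\supseteq\prec$, and a partition $A=\bigsqcup_v A_v$ with members of $A_v$ pairwise conformal and composing to $C^*_v$. $\boldsymbol\theta\in\mathbb{R}^E$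 respects $\prec$ if $0<\theta_e<180$ (degrees) and $\theta_e<\theta_f$ whenever $e\prec f$. $\Sigma(T)$ is the $|A|\times|E|$ matrix with $\Sigma_{a,e}=0$ if $e\notin\underline a$ and $\Sigma_{a,e}=a(e)\sin(\theta_{e''}-\theta_{e'})$ if $\underline a=\{e,e',e''\}$ with $e'\prec e''$. A matrix with $r+1$ rows and $r$ columns is a simplex if its rows have a linear dependency with all coefficients positive and every row dependency is a multiple of it. $T$ is simplicial on $F$ if for every $\boldsymbol\theta$ respecting $\prec$ the submatrix of $\Sigma(T)$ on columns $F$ is a simplex. A positive sequence for $T$ on $F$ is an enumeration $A=\{a_1,\dots,a_m\}$ ($m=|A|$) and an enumeration $F=\{f_2,\dots,f_m\}\subset E$ of distinct edges such that for each $2\le j\le m$: $a_j(f_j)\ne0$; $a_i(f_j)=0$ for all $i>j$; and $a_i(f_j)\in\{0,-a_j(f_j)\}$ for all $i<j$. *)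

theory Defs
  imports Complex_Main
begin

text \<open>A signed set on a ground set is a pair (X+, X-) of (disjoint) sets.\<close>
type_synonym 'e sset = "'e set \<times> 'e set"

definition sval :: "'e sset \<Rightarrow> 'e \<Rightarrow> int" where
  "sval X e = (if e \<in> fst X then 1 else if e \<in> snd X then -1 else 0)"

definition supp :: "'e sset \<Rightarrow> 'e set" where
  "supp X = fst X \<union> snd X"

definition conformal :: "'e sset \<Rightarrow> 'e sset \<Rightarrow> bool" where
  "conformal X Y \<longleftrightarrow> \<not> (\<exists>e. sval X e = - sval Y e \<and> sval X e \<noteq> 0)"

text \<open>Composition: (X o Y)(e) = X(e) if X(e) nonzero, else Y(e).\<close>
definition scomp :: "'e sset \<Rightarrow> 'e sset \<Rightarrow> 'e sset" where
  "scomp X Y = (fst X \<union> (fst Y - supp X), snd X \<union> (snd Y - supp X))"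

definition szero :: "'e sset" where
  "szero = ({}, {})"

definition scomp_list :: "'e sset list \<Rightarrow> 'e sset" where
  "scomp_list xs = foldr scomp xs szero"

definition pairwise_conformal :: "'e sset set \<Rightarrow> bool" where
  "pairwise_conformal S \<longleftrightarrow> (\<forall>X\<in>S. \<forall>Y\<in>S. conformal X Y)"

definition strict_partial_order_on :: "'e set \<Rightarrow> ('e \<times> 'e) set \<Rightarrow> bool" where
  "strict_partial_order_on E r \<longleftrightarrow> r \<subseteq> E \<times> E \<and> (\<forall>x. (x, x) \<notin> r) \<and> trans r"

definition strict_total_order_on :: "'e set \<Rightarrow> ('e \<times> 'e) set \<Rightarrow> bool" where
  "strict_total_order_on E r \<longleftrightarrow> strict_partial_order_on E r \<and>
     (\<forall>x\<in>E. \<forall>y\<in>E. x \<noteq> y \<longrightarrow> (x, y) \<in> r \<or> (y, x) \<in> r)"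

definition circ_total :: "('e \<times> 'e) set \<Rightarrow> 'e sset set" where
  "circ_total lt = {X. \<exists>e1 e2 e3. (e1, e2) \<in> lt \<and> (e2, e3) \<in> lt \<and>
      (X = ({e1, e3}, {e2}) \<or> X = ({e2}, {e1, e3}))}"

definition extensions :: "'e set \<Rightarrow> ('e \<times> 'e) set \<Rightarrow> ('e \<times> 'e) set set" where
  "extensions E prec = {lt. strict_total_order_on E lt \<and> prec \<subseteq> lt}"

definition circ_partial :: "'e set \<Rightarrow> ('e \<times> 'e) set \<Rightarrow> 'e sset set" where
  "circ_partial E prec = (\<Inter>lt\<in>extensions E prec. circ_total lt)"

definition is_vector :: "('e \<times> 'e) set \<Rightarrow> 'e sset \<Rightarrow> bool" where
  "is_vector lt X \<longleftrightarrow> (\<exists>cs. set cs \<subseteq> circ_total lt \<and> pairwise_conformal (set cs) \<and>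
       X = scomp_list cs)"

text \<open>A directed graph is a finite vertex set V with arcs D \<subseteq> V \<times> V, without loops
  and antiparallel arcs (parallel arcs are excluded since D is a set).
  The edge set E of the underlying simple graph G is identified with the arc set D.\<close>
definition digraph :: "'v set \<Rightarrow> ('v \<times> 'v) set \<Rightarrow> bool" where
  "digraph V D \<longleftrightarrow> finite V \<and> D \<subseteq> V \<times> V \<and> (\<forall>v. (v, v) \<notin> D) \<and>
     (\<forall>u w. (u, w) \<in> D \<longrightarrow> (w, u) \<notin> D)"

definition adj_in :: "('v \<times> 'v) set \<Rightarrow> 'v set \<Rightarrow> ('v \<times> 'v) set" where
  "adj_in D S = {(u, w). u \<in> S \<and> w \<in> S \<and> ((u, w) \<in> D \<or> (w, u) \<in> D)}"

definition connected_in :: "('v \<times> 'v) set \<Rightarrow> 'v set \<Rightarrow> bool" where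
  "connected_in D S \<longleftrightarrow> S \<noteq> {} \<and> (\<forall>u\<in>S. \<forall>w\<in>S. (u, w) \<in> (adj_in D S)\<^sup>*)"

text \<open>Three-edge-connected (Diestel's convention: at least two vertices, and removing
  fewer than three edges leaves the graph connected).\<close>
definition three_edge_connected :: "'v set \<Rightarrow> ('v \<times> 'v) set \<Rightarrow> bool" where
  "three_edge_connected V D \<longleftrightarrow> card V > 1 \<and>
     (\<forall>R. R \<subseteq> D \<and> card R < 3 \<longrightarrow> connected_in (D - R) V)"

definition signed_cut :: "('v \<times> 'v) set \<Rightarrow> 'v set \<Rightarrow> ('v \<times> 'v) sset" where
  "signed_cut D S = ({(u, w) \<in> D. u \<in> S \<and> w \<notin> S}, {(u, w) \<in> D. w \<in> S \<and> u \<notin> S})"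

definition signed_minimal_cuts :: "'v set \<Rightarrow> ('v \<times> 'v) set \<Rightarrow> ('v \<times> 'v) sset set" where
  "signed_minimal_cuts V D = {signed_cut D S | S. S \<subseteq> V \<and> connected_in D S \<and> connected_in D (V - S)}"

definition strong_map :: "'v set \<Rightarrow> ('v \<times> 'v) set \<Rightarrow> (('v \<times> 'v) \<times> ('v \<times> 'v)) set \<Rightarrow> bool" where
  "strong_map V D lt \<longleftrightarrow> (\<forall>X\<in>signed_minimal_cuts V D. is_vector lt X)"

definition vertex_cocircuit :: "('v \<times> 'v) set \<Rightarrow> 'v \<Rightarrow> ('v \<times> 'v) sset" where
  "vertex_cocircuit D v = ({(u, w) \<in> D. w = v}, {(u, w) \<in> D. u = v})"

definition twisted_graph ::
  "'v set \<Rightarrow> ('v \<times> 'v) set \<Rightarrow> (('v \<times> 'v) \<times> ('v \<times> 'v)) set \<Rightarrow> ('v \<times> 'v) sset set \<Rightarrow> bool" where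
  "twisted_graph V D prec A \<longleftrightarrow>
     digraph V D \<and>
     strict_partial_order_on D prec \<and>
     three_edge_connected V D \<and>
     A \<subseteq> circ_partial D prec \<and>
     (\<forall>lt\<in>extensions D prec. strong_map V D lt) \<and>
     (\<exists>part :: ('v \<times> 'v) sset \<Rightarrow> 'v. (\<forall>a\<in>A. part a \<in> V) \<and>
        (\<forall>v\<in>V. pairwise_conformal {a\<in>A. part a = v} \<and>
           (\<exists>cs. distinct cs \<and> set cs = {a\<in>A. part a = v} \<and>
                 scomp_list cs = vertex_cocircuit D v)))"

definition respects_order :: "'e set \<Rightarrow> ('e \<times> 'e) set \<Rightarrow> ('e \<Rightarrow> real) \<Rightarrow> bool" where
  "respects_order E prec \<theta> \<longleftrightarrow> (\<forall>e\<in>E. 0 < \<theta> e \<and> \<theta> e < 180) \<and>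
     (\<forall>e f. (e, f) \<in> prec \<longrightarrow> \<theta> e < \<theta> f)"

text \<open>Entry Sigma(a,e): 0 if e is not in the support of a; otherwise, writing the support
  as {e, e', e''} with e' \<prec> e'', it is a(e) sin(\<theta>_{e''} - \<theta>_{e'}) (degrees).\<close>
definition Sigma ::
  "('e \<times> 'e) set \<Rightarrow> ('e \<Rightarrow> real) \<Rightarrow> 'e sset \<Rightarrow> 'e \<Rightarrow> real" where
  "Sigma prec \<theta> a e =
     (if e \<notin> supp a then 0
      else (let p = (THE p. e \<noteq> fst p \<and> e \<noteq> snd p \<and> fst p \<noteq> snd p \<and>
                          supp a = {e, fst p, snd p} \<and> p \<in> prec)
            in of_int (sval a e) * sin ((\<theta> (snd p) - \<theta> (fst p)) * pi / 180)))"

definition is_simplex :: "'r set \<Rightarrow> 'c set \<Rightarrow> ('r \<Rightarrow> 'c \<Rightarrow> real) \<Rightarrow> bool" where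
  "is_simplex R C M \<longleftrightarrow> finite R \<and> finite C \<and> card R = card C + 1 \<and>
     (\<exists>lam. (\<forall>r\<in>R. lam r > 0) \<and> (\<forall>c\<in>C. (\<Sum>r\<in>R. lam r * M r c) = 0) \<and>
        (\<forall>\<mu>. (\<forall>c\<in>C. (\<Sum>r\<in>R. \<mu> r * M r c) = 0) \<longrightarrow> (\<exists>t. \<forall>r\<in>R. \<mu> r = t * lam r)))"

definition simplicial ::
  "('v \<times> 'v) set \<Rightarrow> (('v \<times> 'v) \<times> ('v \<times> 'v)) set \<Rightarrow> ('v \<times> 'v) sset set \<Rightarrow> ('v \<times> 'v) set \<Rightarrow> bool" where
  "simplicial D prec A F \<longleftrightarrow>
     (\<forall>\<theta>. respects_order D prec \<theta> \<longrightarrow> is_simplex A F (Sigma prec \<theta>))"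

definition positive_sequence ::
  "('v \<times> 'v) set \<Rightarrow> ('v \<times> 'v) sset set \<Rightarrow> ('v \<times> 'v) set \<Rightarrow> bool" where
  "positive_sequence D A F \<longleftrightarrow>
     (\<exists>(a :: nat \<Rightarrow> ('v \<times> 'v) sset) (f :: nat \<Rightarrow> 'v \<times> 'v) m.
        m = card A \<and> bij_betw a {1..m} A \<and>
        inj_on f {2..m} \<and> F = f ` {2..m} \<and> F \<subseteq> D \<and>
        (\<forall>j\<in>{2..m}.
           sval (a j) (f j) \<noteq> 0 \<and>
           (\<forall>i\<in>{j<..m}. sval (a i) (f j) = 0) \<and>
           (\<forall>i\<in>{1..<j}. sval (a i) (f j) \<in> {0, - sval (a j) (f j)})))"

end

theory Submission
  imports Defs
begin

text \<open>A circuit of every linear extension of a partial order is already a chain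
  e1 \<prec> e2 \<prec> e3 of the partial order, so for angles respecting the order each entry
  Sigma(a, e) is a positive multiple of a(e). Ordering rows and columns by a positive sequence
  then makes the submatrix on F upper triangular with nonzero diagonal, and above the
  diagonal every column has entries only of the sign opposite to its diagonal entry, at least
  one of them nonzero because each arc occurs with both signs in the vertex cocircuits.
  Solving the columns from left to right gives a positive row dependency, and triangularity
  makes it unique up to scaling.\<close>

lemma strict_partial_order_on_add_pair:
  assumes spo: "strict_partial_order_on D r" and "x \<in> D" "y \<in> D" "x \<noteq> y" "(y, x) \<notin> r"
  shows "strict_partial_order_on D (r \<union> {(u, w). (u = x \<or> (u, x) \<in> r) \<and> (w = y \<or> (y, w) \<in> r)})"
proof -
  have "r \<subseteq> D \<times> D" "\<forall>z. (z, z) \<notin> r" "trans r"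
    using spo unfolding strict_partial_order_on_def by auto
  with assms show ?thesis
    unfolding strict_partial_order_on_def trans_def by blast
qed

lemma extensions_nonempty:
  assumes "finite D" "strict_partial_order_on D r"
  shows "extensions D r \<noteq> {}"
  using assms(2)
proof (induction "card (D \<times> D - r)" arbitrary: r rule: less_induct)
  case less
  show ?case
  proof (cases "\<forall>x\<in>D. \<forall>y\<in>D. x \<noteq> y \<longrightarrow> (x, y) \<in> r \<or> (y, x) \<in> r")
    case True
    then have "r \<in> extensions D r"
      using less.prems unfolding extensions_def strict_total_order_on_def by simp
    then show ?thesis by blast
  next
    case False
    then obtain x y where xy: "x \<in> D" "y \<in> D" "x \<noteq> y" "(x, y) \<notin> r" "(y, x) \<notin> r" by blast
    define r' where "r' = r \<union> {(u, w). (u = x \<or> (u, x) \<in> r) \<and> (w = y \<or> (y, w) \<in> r)}"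
    have spo: "strict_partial_order_on D r'"
      unfolding r'_def by (rule strict_partial_order_on_add_pair[OF less.prems xy(1-3,5)])
    have "D \<times> D - r' \<subset> D \<times> D - r"
      using xy unfolding r'_def by blast
    then have "card (D \<times> D - r') < card (D \<times> D - r)"
      using assms(1) by (intro psubset_card_mono) auto
    then have "extensions D r' \<noteq> {}" using less.hyps spo by blast
    moreover have "extensions D r' \<subseteq> extensions D r"
      unfolding extensions_def r'_def by auto
    ultimately show ?thesis by blast
  qed
qed

lemma extension_containing_pair:
  assumes "finite D" "strict_partial_order_on D r" "x \<in> D" "y \<in> D" "x \<noteq> y" "(y, x) \<notin> r"
  shows "\<exists>lt\<in>extensions D r. (x, y) \<in> lt"
proof -
  define r' where "r' = r \<union> {(u, w). (u = x \<or> (u, x) \<in> r) \<and> (w = y \<or> (y, w) \<in> r)}"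
  have "strict_partial_order_on D r'"
    unfolding r'_def by (rule strict_partial_order_on_add_pair[OF assms(2-6)])
  then obtain lt where "lt \<in> extensions D r'"
    using extensions_nonempty[OF assms(1)] by blast
  then show ?thesis unfolding extensions_def r'_def by auto
qed

lemma extension_with_minimum_below_pair:
  assumes fin: "finite D" and "strict_partial_order_on D r" and "x \<in> D" "y \<in> D" "m \<in> D"
    and "m \<noteq> x" "m \<noteq> y" "(x, m) \<notin> r" "(y, m) \<notin> r"
  shows "\<exists>lt\<in>extensions D r. (m, x) \<in> lt \<and> (m, y) \<in> lt"
proof -
  define r' where "r' = r \<union> {(u, w). (u = m \<or> (u, m) \<in> r) \<and> (w = x \<or> (x, w) \<in> r)}"
  have "strict_partial_order_on D r'"
    unfolding r'_def using assms by (intro strict_partial_order_on_add_pair) auto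
  moreover have "(y, m) \<notin> r'" using assms unfolding r'_def by auto
  ultimately obtain lt where "lt \<in> extensions D r'" "(m, y) \<in> lt"
    using extension_containing_pair[OF fin] assms by blast
  then show ?thesis unfolding extensions_def r'_def by auto
qed

lemma extension_with_maximum_above_pair:
  assumes fin: "finite D" and "strict_partial_order_on D r" and "x \<in> D" "y \<in> D" "m \<in> D"
    and "m \<noteq> x" "m \<noteq> y" "(m, x) \<notin> r" "(m, y) \<notin> r"
  shows "\<exists>lt\<in>extensions D r. (x, m) \<in> lt \<and> (y, m) \<in> lt"
proof -
  define r' where "r' = r \<union> {(u, w). (u = x \<or> (u, x) \<in> r) \<and> (w = m \<or> (m, w) \<in> r)}"
  have "strict_partial_order_on D r'"
    unfolding r'_def using assms by (intro strict_partial_order_on_add_pair) auto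
  moreover have "(m, y) \<notin> r'" using assms unfolding r'_def by auto
  ultimately obtain lt where "lt \<in> extensions D r'" "(y, m) \<in> lt"
    using extension_containing_pair[OF fin] assms by blast
  then show ?thesis unfolding extensions_def r'_def by auto
qed

lemma extensionsD:
  assumes "lt \<in> extensions D r"
  shows "lt \<subseteq> D \<times> D" "(z, z) \<notin> lt" "trans lt"
  using assms unfolding extensions_def strict_total_order_on_def strict_partial_order_on_def by auto

lemma between_in_all_extensions_imp_between:
  assumes fin: "finite D" and spo: "strict_partial_order_on D r"
    and D: "x \<in> D" "y \<in> D" "m \<in> D" and "m \<noteq> x" "m \<noteq> y"
    and between: "\<forall>lt\<in>extensions D r. (x, m) \<in> lt \<and> (m, y) \<in> lt \<or> (y, m) \<in> lt \<and> (m, x) \<in> lt"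
  shows "(x, m) \<in> r \<and> (m, y) \<in> r \<or> (y, m) \<in> r \<and> (m, x) \<in> r"
proof -
  have asym: "False" if "lt \<in> extensions D r" "(u, w) \<in> lt" "(w, u) \<in> lt" for lt u w
    using extensionsD[OF that(1)] that(2,3) by (meson transD)
  have below: "(x, m) \<in> r \<or> (y, m) \<in> r"
  proof (rule ccontr)
    assume "\<not> ?thesis"
    then obtain lt where "lt \<in> extensions D r" "(m, x) \<in> lt" "(m, y) \<in> lt"
      using extension_with_minimum_below_pair[OF fin spo D] assms by blast
    then show False using between asym by blast
  qed
  have above: "(m, x) \<in> r \<or> (m, y) \<in> r"
  proof (rule ccontr)
    assume "\<not> ?thesis"
    then obtain lt where "lt \<in> extensions D r" "(x, m) \<in> lt" "(y, m) \<in> lt"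
      using extension_with_maximum_above_pair[OF fin spo D] assms by blast
    then show False using between asym by blast
  qed
  have "(u, u) \<notin> r" "trans r" for u using spo unfolding strict_partial_order_on_def by auto
  with below above show ?thesis by (meson transD)
qed

lemma circ_total_elim:
  assumes "X \<in> circ_total lt" "trans lt" "\<And>z. (z, z) \<notin> lt"
  obtains e1 e2 e3 where "(e1, e2) \<in> lt" "(e2, e3) \<in> lt" "e1 \<noteq> e2" "e2 \<noteq> e3" "e1 \<noteq> e3"
    "X = ({e1, e3}, {e2}) \<or> X = ({e2}, {e1, e3})"
proof -
  obtain e1 e2 e3 where e: "(e1, e2) \<in> lt" "(e2, e3) \<in> lt" "X = ({e1, e3}, {e2}) \<or> X = ({e2}, {e1, e3})"
    using assms(1) unfolding circ_total_def by blast
  have "(e1, e3) \<in> lt" using transD[OF assms(2) e(1,2)] .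
  then have "e1 \<noteq> e2" "e2 \<noteq> e3" "e1 \<noteq> e3" using e assms(3) by metis+
  with e that show ?thesis by blast
qed

lemma circ_partial_subset_circ_total:
  assumes fin: "finite D" and spo: "strict_partial_order_on D prec"
  shows "circ_partial D prec \<subseteq> circ_total prec"
proof
  fix a assume a: "a \<in> circ_partial D prec"
  obtain lt0 where lt0: "lt0 \<in> extensions D prec"
    using extensions_nonempty[OF fin spo] by blast
  have "a \<in> circ_total lt0" using a lt0 unfolding circ_partial_def by blast
  then obtain e1 e2 e3 where e: "(e1, e2) \<in> lt0" "(e2, e3) \<in> lt0" "e1 \<noteq> e2" "e2 \<noteq> e3" "e1 \<noteq> e3"
      and a_eq: "a = ({e1, e3}, {e2}) \<or> a = ({e2}, {e1, e3})"
    using extensionsD[OF lt0] by (elim circ_total_elim)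
  have in_D: "e1 \<in> D" "e2 \<in> D" "e3 \<in> D" using e(1,2) extensionsD(1)[OF lt0] by auto
  have "(e1, e2) \<in> lt \<and> (e2, e3) \<in> lt \<or> (e3, e2) \<in> lt \<and> (e2, e1) \<in> lt"
    if lt: "lt \<in> extensions D prec" for lt
  proof -
    have "a \<in> circ_total lt" using a lt unfolding circ_partial_def by blast
    then obtain f1 f2 f3 where f: "(f1, f2) \<in> lt" "(f2, f3) \<in> lt" "f1 \<noteq> f3"
        "a = ({f1, f3}, {f2}) \<or> a = ({f2}, {f1, f3})"
      using extensionsD[OF lt] by (elim circ_total_elim)
    have "f2 = e2 \<and> (f1 = e1 \<and> f3 = e3 \<or> f1 = e3 \<and> f3 = e1)"
      using a_eq f(3,4) e(5) by (auto simp: doubleton_eq_iff)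
    with f(1,2) show ?thesis by blast
  qed
  then have "(e1, e2) \<in> prec \<and> (e2, e3) \<in> prec \<or> (e3, e2) \<in> prec \<and> (e2, e1) \<in> prec"
    using between_in_all_extensions_imp_between[OF fin spo in_D(1,3,2)] e(3,4) by auto
  then show "a \<in> circ_total prec"
    using a_eq unfolding circ_total_def by (auto simp: insert_commute)
qed

lemma the_ordered_complement_pair:
  assumes spo: "strict_partial_order_on D prec"
    and "e \<noteq> u" "e \<noteq> v" "u \<noteq> v" "(u, v) \<in> prec"
  shows "(THE p. e \<noteq> fst p \<and> e \<noteq> snd p \<and> fst p \<noteq> snd p \<and> {e, u, v} = {e, fst p, snd p} \<and> p \<in> prec)
    = (u, v)"
proof (rule the_equality)
  fix p assume p: "e \<noteq> fst p \<and> e \<noteq> snd p \<and> fst p \<noteq> snd p \<and> {e, u, v} = {e, fst p, snd p} \<and> p \<in> prec"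
  have "{u, v} = {fst p, snd p}"
    using p assms(2-4) by (auto simp: insert_commute insert_eq_iff)
  moreover have "(v, u) \<notin> prec"
    using assms(5) spo unfolding strict_partial_order_on_def by (meson transD)
  ultimately show "p = (u, v)"
    using p by (cases p) (auto simp: doubleton_eq_iff)
qed (use assms in simp)

text \<open>The angle difference lies in (0, 180) degrees, where sin is positive.\<close>
lemma Sigma_circuit_sign:
  assumes spo: "strict_partial_order_on D prec" and a: "a \<in> circ_total prec"
    and resp: "respects_order D prec \<theta>"
  shows "\<exists>c>0. Sigma prec \<theta> a e = of_int (sval a e) * c"
proof (cases "e \<in> supp a")
  case False
  then have "Sigma prec \<theta> a e = 0" "sval a e = 0" unfolding Sigma_def sval_def supp_def by auto
  then show ?thesis by (intro exI[of _ 1]) simp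
next
  case True
  have sub: "prec \<subseteq> D \<times> D" and "trans prec" "\<And>z. (z, z) \<notin> prec"
    using spo unfolding strict_partial_order_on_def by auto
  then obtain e1 e2 e3 where e: "(e1, e2) \<in> prec" "(e2, e3) \<in> prec" "e1 \<noteq> e2" "e2 \<noteq> e3" "e1 \<noteq> e3"
      and a_eq: "a = ({e1, e3}, {e2}) \<or> a = ({e2}, {e1, e3})"
    using a by (elim circ_total_elim)
  have "(e1, e3) \<in> prec" using e(1,2) \<open>trans prec\<close> by (meson transD)
  moreover have supp_a: "supp a = {e1, e2, e3}" using a_eq unfolding supp_def by auto
  ultimately obtain u v where uv: "e \<noteq> u" "e \<noteq> v" "u \<noteq> v" "supp a = {e, u, v}" "(u, v) \<in> prec"
  proof -
    have "e = e1 \<or> e = e2 \<or> e = e3" using True supp_a by auto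
    then show thesis
    proof (elim disjE)
      assume "e = e1" then show thesis using that[of e2 e3] e supp_a by auto
    next
      assume "e = e2" then show thesis using that[of e1 e3] e \<open>(e1, e3) \<in> prec\<close> supp_a
        by (auto simp: insert_commute)
    next
      assume "e = e3" then show thesis using that[of e1 e2] e supp_a by (auto simp: insert_commute)
    qed
  qed
  have "Sigma prec \<theta> a e = of_int (sval a e) * sin ((\<theta> v - \<theta> u) * pi / 180)"
    unfolding Sigma_def using True the_ordered_complement_pair[OF spo uv(1-3,5)]
    by (simp add: Let_def uv(4))
  moreover have "0 < sin ((\<theta> v - \<theta> u) * pi / 180)"
  proof (rule sin_gt_zero)
    have "\<theta> u < \<theta> v" "0 < \<theta> u" "\<theta> v < 180"
      using resp uv(5) sub unfolding respects_order_def by auto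
    then have "0 < \<theta> v - \<theta> u" "(\<theta> v - \<theta> u) * pi < 180 * pi" by auto
    then show "0 < (\<theta> v - \<theta> u) * pi / 180" "(\<theta> v - \<theta> u) * pi / 180 < pi" by auto
  qed
  ultimately show ?thesis by blast
qed

locale sign_triangular =
  fixes m :: nat and M :: "nat \<Rightarrow> nat \<Rightarrow> real"
  assumes diagonal_nonzero: "j \<in> {2..m} \<Longrightarrow> M j j \<noteq> 0"
    and below_diagonal_zero: "j \<in> {2..m} \<Longrightarrow> i \<in> {j<..m} \<Longrightarrow> M i j = 0"
    and above_diagonal_opposite: "j \<in> {2..m} \<Longrightarrow> i \<in> {1..<j} \<Longrightarrow> M i j * M j j \<le> 0"
    and above_diagonal_nonzero: "j \<in> {2..m} \<Longrightarrow> \<exists>i\<in>{1..<j}. M i j \<noteq> 0"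
begin

lemma column_sum_split:
  assumes j: "j \<in> {2..m}"
  shows "(\<Sum>i\<in>{1..m}. g i * M i j) = (\<Sum>i\<in>{1..<j}. g i * M i j) + g j * M j j"
proof -
  have "(\<Sum>i\<in>{1..m}. g i * M i j) = (\<Sum>i\<in>{1..j}. g i * M i j)"
    using j below_diagonal_zero by (intro sum.mono_neutral_right) auto
  also have "\<dots> = (\<Sum>i\<in>{1..<j}. g i * M i j) + g j * M j j"
    using j by (simp add: atLeastLessThanSuc_atLeastAtMost[symmetric] sum.atLeastLessThan_Suc)
  finally show ?thesis .
qed

text \<open>Columns are solved from left to right: the entries above the diagonal force the next
  coordinate to be positive.\<close>
lemma positive_kernel_vector:
  "\<exists>l. (\<forall>i. l i > 0) \<and> (\<forall>j\<in>{2..m}. (\<Sum>i\<in>{1..m}. l i * M i j) = 0)"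
proof -
  have "\<exists>l. (\<forall>i. l i > 0) \<and> (\<forall>j\<in>{2..n}. (\<Sum>i\<in>{1..m}. l i * M i j) = 0)" if "n \<le> m" for n
    using that
  proof (induction n)
    case 0
    then show ?case by (intro exI[of _ "\<lambda>_. 1"]) auto
  next
    case (Suc n)
    then obtain l where l_pos: "\<forall>i. l i > 0"
        and l_ker: "\<forall>j\<in>{2..n}. (\<Sum>i\<in>{1..m}. l i * M i j) = 0"
      by auto
    show ?case
    proof (cases "n = 0")
      case True
      then show ?thesis using l_pos by auto
    next
      case False
      define j where "j = Suc n"
      have j: "j \<in> {2..m}" using False Suc.prems j_def by auto
      define S where "S = (\<Sum>i\<in>{1..<j}. l i * M i j)"
      define l' where "l' = l(j := - S / M j j)"
      obtain k where k: "k \<in> {1..<j}" "M k j \<noteq> 0" using above_diagonal_nonzero[OF j] by blast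
      have "S * M j j = (\<Sum>i\<in>{1..<j}. l i * (M i j * M j j))"
        unfolding S_def by (simp add: sum_distrib_right mult.assoc)
      also have "\<dots> < 0"
      proof -
        have "\<forall>i\<in>{1..<j}. l i * (M i j * M j j) \<le> 0"
          using l_pos above_diagonal_opposite[OF j] by (simp add: mult_nonneg_nonpos less_imp_le)
        moreover have "M k j * M j j < 0"
          using above_diagonal_opposite[OF j k(1)] k(2) diagonal_nonzero[OF j] by (simp add: less_le)
        then have "l k * (M k j * M j j) < 0" using l_pos by (simp add: mult_pos_neg)
        ultimately have "(\<Sum>i\<in>{1..<j}. l i * (M i j * M j j)) < (\<Sum>i\<in>{1..<j}. 0)"
          using k(1) by (intro sum_strict_mono_ex1) auto
        then show ?thesis by simp
      qed
      finally have "S * M j j < 0" .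
      then have "- S / M j j > 0" by (auto simp: mult_less_0_iff divide_pos_neg divide_neg_pos)
      then have "\<forall>i. l' i > 0" using l_pos unfolding l'_def by simp
      moreover have "(\<Sum>i\<in>{1..m}. l' i * M i jj) = 0" if jj: "jj \<in> {2..Suc n}" for jj
      proof (cases "jj = j")
        case True
        have "(\<Sum>i\<in>{1..<j}. l' i * M i j) = S" unfolding S_def l'_def by (intro sum.cong) auto
        then show ?thesis
          using True column_sum_split[OF j, where g = l'] diagonal_nonzero[OF j] by (simp add: l'_def)
      next
        case False
        then have "jj \<in> {2..n}" using jj j_def by auto
        moreover have "M j jj = 0" using below_diagonal_zero \<open>jj \<in> {2..n}\<close> j j_def by auto
        then have "(\<Sum>i\<in>{1..m}. l' i * M i jj) = (\<Sum>i\<in>{1..m}. l i * M i jj)"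
          unfolding l'_def by (intro sum.cong) auto
        with l_ker \<open>jj \<in> {2..n}\<close> show ?thesis by simp
      qed
      ultimately show ?thesis by blast
    qed
  qed
  then show ?thesis by blast
qed

lemma kernel_vector_zero_if_first_zero:
  assumes ker: "\<forall>j\<in>{2..m}. (\<Sum>i\<in>{1..m}. \<mu> i * M i j) = 0" and "\<mu> 1 = 0"
  shows "\<forall>j\<in>{1..m}. \<mu> j = 0"
proof
  fix j assume "j \<in> {1..m}"
  then show "\<mu> j = 0"
  proof (induction j rule: less_induct)
    case (less j)
    show ?case
    proof (cases "j = 1")
      case False
      then have j: "j \<in> {2..m}" using less.prems by auto
      have "(\<Sum>i\<in>{1..<j}. \<mu> i * M i j) = 0" using less.IH j by simp
      then have "\<mu> j * M j j = 0" using ker j column_sum_split[OF j, where g = \<mu>] by simp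
      then show ?thesis using diagonal_nonzero[OF j] by simp
    qed (use \<open>\<mu> 1 = 0\<close> in simp)
  qed
qed

theorem is_simplex:
  assumes "m \<ge> 1"
  shows "is_simplex {1..m} {2..m} M"
proof -
  obtain l where l_pos: "\<forall>i. l i > 0" and l_ker: "\<forall>j\<in>{2..m}. (\<Sum>i\<in>{1..m}. l i * M i j) = 0"
    using positive_kernel_vector by blast
  have "\<exists>t. \<forall>i\<in>{1..m}. \<mu> i = t * l i"
    if ker: "\<forall>j\<in>{2..m}. (\<Sum>i\<in>{1..m}. \<mu> i * M i j) = 0" for \<mu>
  proof -
    define t where "t = \<mu> 1 / l 1"
    have "\<forall>j\<in>{2..m}. (\<Sum>i\<in>{1..m}. (\<mu> i - t * l i) * M i j) = 0"
      using ker l_ker by (simp add: left_diff_distrib sum_subtractf mult.assoc sum_distrib_left[symmetric])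
    moreover have "\<mu> 1 - t * l 1 = 0" using l_pos[rule_format, of 1] unfolding t_def by simp
    ultimately have "\<forall>i\<in>{1..m}. \<mu> i - t * l i = 0" by (rule kernel_vector_zero_if_first_zero)
    then show ?thesis by auto
  qed
  then show ?thesis
    unfolding is_simplex_def using assms l_pos l_ker by auto
qed

end

lemma is_simplex_reindex:
  assumes a: "bij_betw a I R" and f: "bij_betw f J C"
    and simplex: "is_simplex I J (\<lambda>i j. M (a i) (f j))"
  shows "is_simplex R C M"
proof -
  obtain l where l_pos: "\<forall>i\<in>I. l i > 0"
      and l_ker: "\<forall>j\<in>J. (\<Sum>i\<in>I. l i * M (a i) (f j)) = 0"
      and unique: "\<And>\<mu>. \<forall>j\<in>J. (\<Sum>i\<in>I. \<mu> i * M (a i) (f j)) = 0 \<Longrightarrow> \<exists>t. \<forall>i\<in>I. \<mu> i = t * l i"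
    using simplex unfolding is_simplex_def by blast
  define lam where "lam r = l (inv_into I a r)" for r
  have inv: "inv_into I a (a i) = i" if "i \<in> I" for i
    using a that by (simp add: bij_betw_def)
  have reindex: "(\<Sum>r\<in>R. g r) = (\<Sum>i\<in>I. g (a i))" for g :: "_ \<Rightarrow> real"
    by (rule sum.reindex_bij_betw[OF a, symmetric])
  have C_eq: "C = f ` J" and R_eq: "R = a ` I" using a f by (auto simp: bij_betw_def)
  have "\<forall>r\<in>R. lam r > 0" using l_pos inv unfolding R_eq lam_def by auto
  moreover have "\<forall>c\<in>C. (\<Sum>r\<in>R. lam r * M r c) = 0"
    using l_ker inv unfolding C_eq reindex lam_def by simp
  moreover have "\<exists>t. \<forall>r\<in>R. \<mu> r = t * lam r" if "\<forall>c\<in>C. (\<Sum>r\<in>R. \<mu> r * M r c) = 0" for \<mu>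
  proof -
    have "\<forall>j\<in>J. (\<Sum>i\<in>I. \<mu> (a i) * M (a i) (f j)) = 0"
      using that unfolding C_eq reindex by simp
    then show ?thesis using unique inv unfolding R_eq lam_def by fastforce
  qed
  moreover have "finite R" "finite C" "card R = card C + 1"
    using simplex bij_betw_finite[OF a] bij_betw_finite[OF f] bij_betw_same_card[OF a]
      bij_betw_same_card[OF f] unfolding is_simplex_def by auto
  ultimately show ?thesis unfolding is_simplex_def by blast
qed

lemma sign_triangular_by_signs:
  fixes s :: "nat \<Rightarrow> nat \<Rightarrow> int"
  assumes sign: "\<And>i j. i \<in> {1..m} \<Longrightarrow> \<exists>c>0. M i j = of_int (s i j) * c"
    and diagonal: "\<And>j. j \<in> {2..m} \<Longrightarrow> s j j \<noteq> 0"
    and below: "\<And>i j. j \<in> {2..m} \<Longrightarrow> i \<in> {j<..m} \<Longrightarrow> s i j = 0"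
    and above: "\<And>i j. j \<in> {2..m} \<Longrightarrow> i \<in> {1..<j} \<Longrightarrow> s i j \<in> {0, - s j j}"
    and opposite: "\<And>j. j \<in> {2..m} \<Longrightarrow> \<exists>i\<in>{1..m}. s i j = - s j j"
  shows "sign_triangular m M"
proof
  have zero_iff: "M i j = 0 \<longleftrightarrow> s i j = 0" if "i \<in> {1..m}" for i j
    using sign[OF that, of j] by auto
  fix j assume j: "j \<in> {2..m}"
  then have j_row: "j \<in> {1..m}" by simp
  show "M j j \<noteq> 0" using zero_iff[OF j_row] diagonal[OF j] by simp
  show "M i j = 0" if "i \<in> {j<..m}" for i
    using zero_iff[of i j] below[OF j that] that by simp
  show "M i j * M j j \<le> 0" if i: "i \<in> {1..<j}" for i
  proof -
    obtain c d where "c > 0" "d > 0" "M i j = of_int (s i j) * c" "M j j = of_int (s j j) * d"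
      using sign[of i j] sign[OF j_row, of j] i j by auto
    moreover have "s i j * s j j \<le> 0" using above[OF j i] by auto
    then have "of_int (s i j) * of_int (s j j) \<le> (0 :: real)"
      by (metis of_int_le_0_iff of_int_mult)
    ultimately have "M i j * M j j = (c * d) * (of_int (s i j) * of_int (s j j))" "c * d > 0"
      by (simp_all add: algebra_simps)
    with \<open>of_int (s i j) * of_int (s j j) \<le> (0 :: real)\<close> show ?thesis
      by (simp add: mult_nonneg_nonpos)
  qed
  obtain i where i: "i \<in> {1..m}" "s i j = - s j j" using opposite[OF j] by blast
  moreover have "i \<noteq> j" "\<not> j < i" using i below[OF j, of i] diagonal[OF j] by auto
  ultimately have "i \<in> {1..<j}" by auto
  moreover have "M i j \<noteq> 0" using zero_iff i diagonal[OF j] by simp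
  ultimately show "\<exists>i\<in>{1..<j}. M i j \<noteq> 0" by blast
qed

lemma sval_scomp: "sval (scomp X Y) e = (if sval X e \<noteq> 0 then sval X e else sval Y e)"
  unfolding sval_def scomp_def supp_def by auto

lemma sval_scomp_list_nonzero:
  "sval (scomp_list cs) e \<noteq> 0 \<Longrightarrow> \<exists>c\<in>set cs. sval c e = sval (scomp_list cs) e"
  by (induction cs) (auto simp: scomp_list_def szero_def sval_def[of "({}, {})"] sval_scomp)

lemma twisted_graph_arc_signs:
  assumes tg: "twisted_graph V D prec A" and e: "e \<in> D" and s: "s \<in> {1, -1}"
  shows "\<exists>c\<in>A. sval c e = s"
proof -
  obtain u w where uw: "e = (u, w)" by (cases e)
  have "u \<in> V" "w \<in> V" "u \<noteq> w" using tg e uw unfolding twisted_graph_def digraph_def by auto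
  then obtain v where v: "v \<in> V" "sval (vertex_cocircuit D v) e = s"
    using s e uw unfolding vertex_cocircuit_def sval_def by auto
  obtain part :: "('a \<times> 'a) sset \<Rightarrow> 'a" and cs where
    "set cs = {a\<in>A. part a = v}" "scomp_list cs = vertex_cocircuit D v"
    using tg v(1) unfolding twisted_graph_def by blast
  then show ?thesis
    using sval_scomp_list_nonzero[of cs e] v(2) s by auto
qed

lemma three_edge_connected_arcs_nonempty:
  assumes "three_edge_connected V D"
  shows "D \<noteq> {}"
proof
  assume "D = {}"
  then have "adj_in D V = {}" unfolding adj_in_def by simp
  moreover have "connected_in D V" "card V > 1"
    using assms spec[of _ "{}"] unfolding three_edge_connected_def by auto
  ultimately have "\<forall>v\<in>V. \<forall>w\<in>V. v = w" unfolding connected_in_def by simp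
  then have "card V \<le> 1" by (cases "finite V") (auto simp: card_le_Suc0_iff_eq)
  with \<open>card V > 1\<close> show False by simp
qed

lemma twisted_graph_circuits_total:
  assumes "twisted_graph V D prec A"
  shows "A \<subseteq> circ_total prec"
proof -
  have "digraph V D" "strict_partial_order_on D prec" "A \<subseteq> circ_partial D prec"
    using assms unfolding twisted_graph_def by blast+
  moreover from \<open>digraph V D\<close> have "finite D"
    unfolding digraph_def by (meson finite_SigmaI finite_subset)
  ultimately show ?thesis using circ_partial_subset_circ_total by blast
qed

lemma twisted_graph_circuits_nonempty:
  assumes "twisted_graph V D prec A"
  shows "A \<noteq> {}"
proof -
  have "three_edge_connected V D" using assms unfolding twisted_graph_def by blast
  then obtain e where "e \<in> D" using three_edge_connected_arcs_nonempty by blast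
  then show ?thesis using twisted_graph_arc_signs[OF assms, of e 1] by auto
qed

theorem mainTheorem15:
  fixes V :: "'v set" and D :: "('v \<times> 'v) set"
    and prec :: "(('v \<times> 'v) \<times> ('v \<times> 'v)) set"
    and A :: "('v \<times> 'v) sset set" and F :: "('v \<times> 'v) set"
  assumes "twisted_graph V D prec A"
    and "positive_sequence D A F"
  shows "simplicial D prec A F"
  unfolding simplicial_def
proof (intro allI impI)
  fix \<theta> assume resp: "respects_order D prec \<theta>"
  have spo: "strict_partial_order_on D prec"
    using assms(1) unfolding twisted_graph_def by blast
  obtain a f m where m: "m = card A" and a: "bij_betw a {1..m} A"
      and f: "inj_on f {2..m}" "F = f ` {2..m}" "F \<subseteq> D"
      and seq: "\<forall>j\<in>{2..m}. sval (a j) (f j) \<noteq> 0 \<and> (\<forall>i\<in>{j<..m}. sval (a i) (f j) = 0) \<and>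
        (\<forall>i\<in>{1..<j}. sval (a i) (f j) \<in> {0, - sval (a j) (f j)})"
    using assms(2) unfolding positive_sequence_def by (elim exE conjE) (rule that; assumption)
  have "m \<ge> 1"
    using twisted_graph_circuits_nonempty[OF assms(1)] m bij_betw_finite[OF a]
    by (simp add: Suc_le_eq card_gt_0_iff)
  have "sign_triangular m (\<lambda>i j. Sigma prec \<theta> (a i) (f j))"
  proof (rule sign_triangular_by_signs[where s = "\<lambda>i j. sval (a i) (f j)"])
    show "\<exists>c>0. Sigma prec \<theta> (a i) (f j) = of_int (sval (a i) (f j)) * c" if "i \<in> {1..m}" for i j
    proof -
      have "a i \<in> circ_total prec"
        using a that twisted_graph_circuits_total[OF assms(1)] by (auto simp: bij_betw_def)
      then show ?thesis by (rule Sigma_circuit_sign[OF spo _ resp])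
    qed
    show "\<exists>i\<in>{1..m}. sval (a i) (f j) = - sval (a j) (f j)" if j: "j \<in> {2..m}" for j
    proof -
      have "sval (a j) (f j) \<noteq> 0" using seq j by blast
      then have "- sval (a j) (f j) \<in> {1, -1}" unfolding sval_def by (auto split: if_splits)
      then obtain c where "c \<in> A" "sval c (f j) = - sval (a j) (f j)"
        using twisted_graph_arc_signs[OF assms(1)] f(2,3) j by blast
      then show ?thesis using a by (auto simp: bij_betw_def)
    qed
  qed (use seq in auto)
  then have "is_simplex {1..m} {2..m} (\<lambda>i j. Sigma prec \<theta> (a i) (f j))"
    using \<open>m \<ge> 1\<close> by (rule sign_triangular.is_simplex)
  moreover have "bij_betw f {2..m} F" using f(1,2) by (simp add: bij_betw_def)
  ultimately show "is_simplex A F (Sigma prec \<theta>)" using a by (metis is_simplex_reindex)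
qed

end
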